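(* Let $s=(s_1,\dots,s_m)$ be a sequence of positive integers and let $\alpha$ be a pattern whose largest value $k$ is internal (no copy of $k$ is the first or last letter of $\alpha$) and isolated (no two copies of $k$ are consecutive letters of $\alpha$). Then $\mathrm{Av}_s(\alpha)$ is a zig-zag language.
   Context: For a sequence $s=(s_1,\dots,s_m)$ of positive integers, an $s$-word is a word with exactly $s_i$ copies of $i$ for each $i\in[m]$; $S_s$ is the set of $s$-words. A pattern is a word $\alpha=\alpha_1\cdots\alpha_\ell$ over $[k]$ using every value of $[k]$. A word $w$ contains $\alpha$ if there are indices $i_1<\dots<i_\ell$ such that for all $a,b$: $w_{i_a}<w_{i_b}$ iff $\alpha_a<\alpha_b$, and $w_{i_a}=w_{i_b}$ iff $\alpha_a=\alpha_b$; otherwise $w$ avoids $\alpha$. $\mathrm{Av}_s(\alpha)$ is the set of $s$-words avoiding $\alpha$. Parent operation: $p(s)=(s_1,\dots,s_{m-1},s_m-1)$ if $s_m>1$ and $p(s)=(s_1,\dots,s_{m-1})$ if $s_m=1$; for an $s$-word $w$, $p(w)$ deletes the rightmost copy of $m$; $p(L)=\{p(w):w\in L\}$. Zig-zag language (recursive on $n=\sum s_i$): for the empty sequence the only zig-zag language is $\{\varepsilon\}$. For $n\ge1$, $L\subseteq S_s$ is zig-zag if $p(L)$ is a zig-zag language of $p(s)$-words and for every $w'\in p(L)$ both of the following lie in $L$: (a) $w'm$, and (b) $mw'$ if $s_m=1$, or, if $s_m>1$, the word obtained by inserting $m$ immediately next to the rightmost $m$ of $w'$. *)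

theory Defs
  imports Main
begin

text \<open>Sequences s = (s_1,...,s_m) are lists; s_i = s ! (i - 1). Words are lists of
  positive naturals.\<close>

definition swords :: "nat list \<Rightarrow> nat list set" where
  "swords s = {w. (\<forall>x\<in>set w. 1 \<le> x \<and> x \<le> length s) \<and>
                  (\<forall>i\<in>{1..length s}. count_list w i = s ! (i - 1))}"

definition is_pattern :: "nat list \<Rightarrow> bool" where
  "is_pattern \<alpha> = (\<alpha> \<noteq> [] \<and> set \<alpha> = {1..Max (set \<alpha>)})"

definition contains :: "nat list \<Rightarrow> nat list \<Rightarrow> bool" where
  "contains w \<alpha> = (\<exists>idx :: nat list. length idx = length \<alpha> \<and> sorted_wrt (<) idx \<and>
      (\<forall>j\<in>set idx. j < length w) \<and>
      (\<forall>a<length \<alpha>. \<forall>b<length \<alpha>.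
          (w ! (idx ! a) < w ! (idx ! b) \<longleftrightarrow> \<alpha> ! a < \<alpha> ! b) \<and>
          (w ! (idx ! a) = w ! (idx ! b) \<longleftrightarrow> \<alpha> ! a = \<alpha> ! b)))"

definition Av :: "nat list \<Rightarrow> nat list \<Rightarrow> nat list set" where
  "Av s \<alpha> = {w \<in> swords s. \<not> contains w \<alpha>}"

definition pseq :: "nat list \<Rightarrow> nat list" where
  "pseq s = (if last s > 1 then butlast s @ [last s - 1] else butlast s)"

definition pword :: "nat \<Rightarrow> nat list \<Rightarrow> nat list" where
  "pword m w = rev (remove1 m (rev w))"

fun dup_first :: "nat \<Rightarrow> nat list \<Rightarrow> nat list" where
  "dup_first m [] = []"
| "dup_first m (x # xs) = (if x = m then m # m # xs else x # dup_first m xs)"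

definition dup_last :: "nat \<Rightarrow> nat list \<Rightarrow> nat list" where
  "dup_last m w = rev (dup_first m (rev w))"

function zigzag :: "nat list \<Rightarrow> nat list set \<Rightarrow> bool" where
  "zigzag s L =
     (if s = [] then L = {[]}
      else L \<subseteq> swords s \<and>
           zigzag (pseq s) (pword (length s) ` L) \<and>
           (\<forall>w'\<in>pword (length s) ` L.
               w' @ [length s] \<in> L \<and>
               (if last s = 1 then length s # w' \<in> L
                else dup_last (length s) w' \<in> L)))"
  by pat_completeness auto
termination
proof (relation "measure (\<lambda>(s, L). sum_list s + length s)")
  fix s :: "nat list" and L :: "nat list set"
  assume "s \<noteq> []"
  then obtain t x where s: "s = t @ [x]" by (metis rev_exhaust)
  show "((pseq s, pword (length s) ` L), s, L) \<in> measure (\<lambda>(s, L). sum_list s + length s)"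
    by (auto simp: s pseq_def)
qed auto

end

theory Submission
  imports Defs
begin

text \<open>Deleting a letter cannot create an occurrence of a pattern, so the parent of an
  \<alpha>-avoiding s-word avoids \<alpha>. Conversely, let w' avoid \<alpha> and let m be its new largest
  letter. In an occurrence of \<alpha> in a word whose largest letter is m, any copy of m used
  must play the role of k. An occurrence in w'm or mw' that uses the new m would therefore
  put k at the end or the start of \<alpha>, which internality forbids; an occurrence in the word
  with the rightmost m doubled that uses both adjacent copies would put two consecutive k's
  in \<alpha>, which isolation forbids. Every other occurrence is an occurrence in w'. Hence
  p(Av_s(\<alpha>)) = Av_p(s)(\<alpha>), the required children lie in Av_s(\<alpha>), and induction along
  the parent operation finishes the proof.\<close>

definition occurrence :: "nat list \<Rightarrow> nat list \<Rightarrow> nat list \<Rightarrow> bool" where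
  "occurrence w \<alpha> idx = (length idx = length \<alpha> \<and> sorted_wrt (<) idx \<and>
      (\<forall>j\<in>set idx. j < length w) \<and>
      (\<forall>a<length \<alpha>. \<forall>b<length \<alpha>.
          (w ! (idx ! a) < w ! (idx ! b) \<longleftrightarrow> \<alpha> ! a < \<alpha> ! b) \<and>
          (w ! (idx ! a) = w ! (idx ! b) \<longleftrightarrow> \<alpha> ! a = \<alpha> ! b)))"

lemma contains_iff_occurrence: "contains w \<alpha> \<longleftrightarrow> (\<exists>idx. occurrence w \<alpha> idx)"
  unfolding contains_def occurrence_def by blast

lemma occurrence_reindex:
  assumes occ: "occurrence w \<alpha> idx"
    and mono: "\<And>i j. i \<in> set idx \<Longrightarrow> j \<in> set idx \<Longrightarrow> i < j \<Longrightarrow> f i < f j"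
    and letters: "\<And>i. i \<in> set idx \<Longrightarrow> f i < length v \<and> v ! f i = w ! i"
  shows "occurrence v \<alpha> (map f idx)"
proof -
  have len: "length idx = length \<alpha>" and sorted: "sorted_wrt (<) idx"
    using occ by (auto simp: occurrence_def)
  have "sorted_wrt (<) (map f idx)"
    unfolding sorted_wrt_map using sorted by (rule sorted_wrt_mono_rel[rotated]) (rule mono)
  moreover have "v ! (map f idx ! a) = w ! (idx ! a)" if "a < length \<alpha>" for a
    using letters[of "idx ! a"] that len by simp
  ultimately show ?thesis
    using occ letters len by (auto simp: occurrence_def)
qed

lemma contains_insert:
  assumes "contains (xs @ ys) \<alpha>"
  shows "contains (xs @ y # ys) \<alpha>"
proof -
  obtain idx where occ: "occurrence (xs @ ys) \<alpha> idx"
    using assms by (auto simp: contains_iff_occurrence)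
  define shift where "shift i = (if i < length xs then i else Suc i)" for i
  have bound: "\<forall>i\<in>set idx. i < length (xs @ ys)"
    using occ by (simp add: occurrence_def)
  have "occurrence (xs @ y # ys) \<alpha> (map shift idx)"
    using occ by (rule occurrence_reindex) (use bound in \<open>auto simp: shift_def nth_append\<close>)
  then show ?thesis by (auto simp: contains_iff_occurrence)
qed

lemma contains_delete_unused:
  assumes occ: "occurrence (xs @ y # ys) \<alpha> idx" and unused: "length xs \<notin> set idx"
  shows "contains (xs @ ys) \<alpha>"
proof -
  define unshift where "unshift i = (if i < length xs then i else i - 1)" for i
  have "occurrence (xs @ ys) \<alpha> (map unshift idx)"
    using occ
  proof (rule occurrence_reindex)
    show "unshift i < unshift j" if "i \<in> set idx" "j \<in> set idx" "i < j" for i j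
    proof -
      have "i \<noteq> length xs" "j \<noteq> length xs" using that unused by auto
      then show ?thesis using \<open>i < j\<close> by (auto simp: unshift_def)
    qed
    show "unshift i < length (xs @ ys) \<and> (xs @ ys) ! unshift i = (xs @ y # ys) ! i"
      if "i \<in> set idx" for i
    proof -
      have "i \<noteq> length xs" "i < Suc (length xs + length ys)"
        using that unused occ by (auto simp: occurrence_def)
      then show ?thesis
        by (cases "i < length xs") (auto simp: unshift_def nth_append nth_Cons')
    qed
  qed
  then show ?thesis by (auto simp: contains_iff_occurrence)
qed

lemma pword_split:
  assumes "m \<in> set w"
  obtains xs ys where "w = xs @ m # ys" "pword m w = xs @ ys"
proof -
  obtain xs ys where "w = xs @ m # ys" "m \<notin> set ys"
    using split_list_last[OF assms] by blast
  then show ?thesis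
    using that by (simp add: pword_def remove1_append)
qed

lemma dup_first_append: "m \<notin> set xs \<Longrightarrow> dup_first m (xs @ m # ys) = xs @ m # m # ys"
  by (induction xs) auto

lemma dup_last_split:
  assumes "m \<in> set w"
  obtains xs ys where "w = xs @ m # ys" "dup_last m w = xs @ m # m # ys"
proof -
  obtain xs ys where "w = xs @ m # ys" "m \<notin> set ys"
    using split_list_last[OF assms] by blast
  then show ?thesis
    using that by (simp add: dup_last_def dup_first_append)
qed

lemma contains_pword: "contains (pword m w) \<alpha> \<Longrightarrow> contains w \<alpha>"
proof (cases "m \<in> set w")
  case True
  then obtain xs ys where "w = xs @ m # ys" "pword m w = xs @ ys"
    by (rule pword_split)
  then show "contains (pword m w) \<alpha> \<Longrightarrow> contains w \<alpha>"
    by (simp add: contains_insert)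
qed (simp add: pword_def remove1_idem)

lemma occurrence_max:
  assumes occ: "occurrence w \<alpha> idx" and a: "a < length \<alpha>"
    and largest: "\<forall>x\<in>set w. x \<le> w ! (idx ! a)"
  shows "\<alpha> ! a = Max (set \<alpha>)"
proof (rule Max_eqI[symmetric])
  show "\<alpha> ! a \<in> set \<alpha>" using a by simp
next
  fix y assume "y \<in> set \<alpha>"
  then obtain b where b: "b < length \<alpha>" "y = \<alpha> ! b" by (auto simp: in_set_conv_nth)
  then have "idx ! b < length w" using occ by (auto simp: occurrence_def)
  then have "\<not> w ! (idx ! a) < w ! (idx ! b)" using largest by (simp add: not_less)
  then show "y \<le> \<alpha> ! a" using occ a b by (auto simp: occurrence_def)
qed simp

lemma not_contains_snoc_max:
  assumes avoid: "\<not> contains w \<alpha>" and bounded: "\<forall>x\<in>set w. x \<le> m"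
    and not_last: "\<forall>i<length \<alpha>. \<alpha> ! i = Max (set \<alpha>) \<longrightarrow> i + 1 < length \<alpha>"
  shows "\<not> contains (w @ [m]) \<alpha>"
proof
  assume "contains (w @ [m]) \<alpha>"
  then obtain idx where occ: "occurrence (w @ [m]) \<alpha> idx"
    by (auto simp: contains_iff_occurrence)
  have len: "length idx = length \<alpha>" and sorted: "sorted_wrt (<) idx"
    and bound: "\<forall>j\<in>set idx. j < Suc (length w)"
    using occ by (auto simp: occurrence_def)
  show False
  proof (cases "length w \<in> set idx")
    case False
    then show False using contains_delete_unused[of w m "[]"] occ avoid by simp
  next
    case True
    then obtain a where a: "a < length \<alpha>" "idx ! a = length w"
      using len by (auto simp: in_set_conv_nth)
    then have "\<alpha> ! a = Max (set \<alpha>)" using occurrence_max[OF occ] bounded by auto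
    then have "a + 1 < length \<alpha>" using not_last a by blast
    then have "idx ! a < idx ! (a + 1)" "idx ! (a + 1) \<in> set idx"
      using sorted len by (auto simp: sorted_wrt_iff_nth_less)
    then show False using a bound by auto
  qed
qed

lemma not_contains_Cons_max:
  assumes avoid: "\<not> contains w \<alpha>" and bounded: "\<forall>x\<in>set w. x \<le> m"
    and not_first: "\<forall>i<length \<alpha>. \<alpha> ! i = Max (set \<alpha>) \<longrightarrow> 0 < i"
  shows "\<not> contains (m # w) \<alpha>"
proof
  assume "contains (m # w) \<alpha>"
  then obtain idx where occ: "occurrence (m # w) \<alpha> idx"
    by (auto simp: contains_iff_occurrence)
  have len: "length idx = length \<alpha>" and sorted: "sorted_wrt (<) idx"
    using occ by (auto simp: occurrence_def)
  show False
  proof (cases "0 \<in> set idx")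
    case False
    then show False using contains_delete_unused[of "[]" m w] occ avoid by simp
  next
    case True
    then obtain a where a: "a < length \<alpha>" "idx ! a = 0"
      using len by (auto simp: in_set_conv_nth)
    then have "\<alpha> ! a = Max (set \<alpha>)" using occurrence_max[OF occ] bounded by auto
    then have "0 < a" using not_first a by blast
    then have "idx ! (a - 1) < idx ! a"
      using sorted_wrt_nth_less[OF sorted, of "a - 1" a] len a by simp
    then show False using a by simp
  qed
qed

lemma sorted_wrt_less_nth_Suc:
  assumes "sorted_wrt (<) xs" "a < length xs" "b < length xs" "xs ! b = Suc (xs ! a)"
  shows "b = Suc a"
proof -
  have "a < b"
  proof (rule ccontr)
    assume "\<not> a < b"
    then consider "b < a" | "b = a" by linarith
    then show False
      using assms sorted_wrt_nth_less[OF assms(1), of b a] by cases auto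
  qed
  moreover have "\<not> Suc a < b"
    using assms sorted_wrt_nth_less[OF assms(1), of a "Suc a"] sorted_wrt_nth_less[OF assms(1), of "Suc a" b]
    by auto
  ultimately show ?thesis by simp
qed

lemma not_contains_dup_max:
  assumes avoid: "\<not> contains (xs @ m # ys) \<alpha>" and bounded: "\<forall>x\<in>set (xs @ m # ys). x \<le> m"
    and isolated: "\<forall>i. i + 1 < length \<alpha> \<longrightarrow> \<not> (\<alpha> ! i = Max (set \<alpha>) \<and> \<alpha> ! (i + 1) = Max (set \<alpha>))"
  shows "\<not> contains (xs @ m # m # ys) \<alpha>"
proof
  assume "contains (xs @ m # m # ys) \<alpha>"
  then obtain idx where occ: "occurrence (xs @ m # m # ys) \<alpha> idx"
    by (auto simp: contains_iff_occurrence)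
  have len: "length idx = length \<alpha>" and sorted: "sorted_wrt (<) idx"
    using occ by (auto simp: occurrence_def)
  show False
  proof (cases "length xs \<in> set idx \<and> Suc (length xs) \<in> set idx")
    case False
    moreover have "occurrence ((xs @ [m]) @ m # ys) \<alpha> idx" using occ by simp
    ultimately show False
      using contains_delete_unused[OF occ] contains_delete_unused[of "xs @ [m]"] avoid by auto
  next
    case True
    then obtain a b where a: "a < length \<alpha>" "idx ! a = length xs"
      and b: "b < length \<alpha>" "idx ! b = Suc (length xs)"
      using len by (auto simp: in_set_conv_nth)
    have "b = a + 1"
      using sorted_wrt_less_nth_Suc[OF sorted] len a b by simp
    have letters: "(xs @ m # m # ys) ! (idx ! a) = m" "(xs @ m # m # ys) ! (idx ! b) = m"
      using a b by (auto simp: nth_append)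
    then have "\<alpha> ! a = Max (set \<alpha>)" using occurrence_max[OF occ a(1)] bounded by auto
    moreover have "\<alpha> ! b = \<alpha> ! a"
      using occ a(1) b(1) letters unfolding occurrence_def by metis
    ultimately show False using isolated \<open>b = a + 1\<close> b by auto
  qed
qed

definition copies :: "nat list \<Rightarrow> nat \<Rightarrow> nat" where
  "copies s i = (if 1 \<le> i \<and> i \<le> length s then s ! (i - 1) else 0)"

lemma swords_iff_count: "w \<in> swords s \<longleftrightarrow> (\<forall>i. count_list w i = copies s i)"
proof
  assume w: "w \<in> swords s"
  show "\<forall>i. count_list w i = copies s i"
  proof
    fix i
    show "count_list w i = copies s i"
    proof (cases "1 \<le> i \<and> i \<le> length s")
      case False
      then have "i \<notin> set w" using w by (auto simp: swords_def)
      then show ?thesis using False by (auto simp: copies_def)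
    qed (use w in \<open>auto simp: swords_def copies_def\<close>)
  qed
next
  assume count: "\<forall>i. count_list w i = copies s i"
  have "1 \<le> x \<and> x \<le> length s" if "x \<in> set w" for x
    using count[rule_format, of x] that count_list_0_iff[of w x] by (auto simp: copies_def split: if_splits)
  then show "w \<in> swords s" using count by (auto simp: swords_def copies_def)
qed

lemma copies_length: "s \<noteq> [] \<Longrightarrow> copies s (length s) = last s"
  by (simp add: copies_def last_conv_nth Suc_leI)

lemma copies_pseq:
  assumes "s \<noteq> []"
  shows "copies (pseq s) i = (if i = length s then copies s i - 1 else copies s i)"
proof -
  obtain t l where s: "s = t @ [l]" using assms by (metis rev_exhaust)
  show ?thesis
    by (cases "1 < l") (auto simp: s pseq_def copies_def nth_append le_Suc_eq)
qed

lemma swords_pseq_bounded: "s \<noteq> [] \<Longrightarrow> w \<in> swords (pseq s) \<Longrightarrow> \<forall>x\<in>set w. x \<le> length s"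
  by (fastforce simp: swords_def pseq_def split: if_splits)

lemma pword_in_swords:
  assumes "s \<noteq> []" "w \<in> swords s"
  shows "pword (length s) w \<in> swords (pseq s)"
  using assms by (simp add: swords_iff_count copies_pseq pword_def)

lemma swords_add_last_letter:
  assumes "s \<noteq> []" "0 < last s" "w \<in> swords (pseq s)"
    and "\<forall>i. count_list v i = count_list w i + (if i = length s then 1 else 0)"
  shows "v \<in> swords s"
  using assms copies_length[of s] by (auto simp: swords_iff_count copies_pseq)

lemma Av_Nil: "\<alpha> \<noteq> [] \<Longrightarrow> Av [] \<alpha> = {[]}"
proof -
  assume "\<alpha> \<noteq> []"
  then have "\<not> contains [] \<alpha>"
    by (auto simp: contains_def)
  moreover have "w \<in> swords [] \<longleftrightarrow> w = []" for w
    by (cases w) (auto simp: swords_def)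
  ultimately show ?thesis by (auto simp: Av_def)
qed

lemma pword_in_Av: "s \<noteq> [] \<Longrightarrow> w \<in> Av s \<alpha> \<Longrightarrow> pword (length s) w \<in> Av (pseq s) \<alpha>"
  by (auto simp: Av_def pword_in_swords dest: contains_pword)

declare zigzag.simps [simp del] \<comment> \<open>unconditional recursive equation: the simplifier would loop\<close>

lemma zigzag_Nil: "zigzag [] L \<longleftrightarrow> L = {[]}"
  by (simp add: zigzag.simps)

lemma zigzag_nonempty:
  assumes "s \<noteq> []"
  shows "zigzag s L \<longleftrightarrow> L \<subseteq> swords s \<and> zigzag (pseq s) (pword (length s) ` L) \<and>
    (\<forall>w\<in>pword (length s) ` L. w @ [length s] \<in> L \<and>
       (if last s = 1 then length s # w \<in> L else dup_last (length s) w \<in> L))"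
  using assms by (subst zigzag.simps) simp

lemma snoc_in_Av:
  assumes s: "s \<noteq> []" "0 < last s" and w: "w \<in> Av (pseq s) \<alpha>"
    and not_last: "\<forall>i<length \<alpha>. \<alpha> ! i = Max (set \<alpha>) \<longrightarrow> i + 1 < length \<alpha>"
  shows "w @ [length s] \<in> Av s \<alpha>"
proof -
  have word: "w \<in> swords (pseq s)" and avoid: "\<not> contains w \<alpha>"
    using w by (auto simp: Av_def)
  have "w @ [length s] \<in> swords s"
    by (rule swords_add_last_letter[OF s word]) simp
  moreover have "\<not> contains (w @ [length s]) \<alpha>"
    using avoid swords_pseq_bounded[OF s(1) word] not_last by (rule not_contains_snoc_max)
  ultimately show ?thesis by (simp add: Av_def)
qed

lemma Cons_in_Av:
  assumes s: "s \<noteq> []" "last s = 1" and w: "w \<in> Av (pseq s) \<alpha>"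
    and not_first: "\<forall>i<length \<alpha>. \<alpha> ! i = Max (set \<alpha>) \<longrightarrow> 0 < i"
  shows "length s # w \<in> Av s \<alpha>"
proof -
  have word: "w \<in> swords (pseq s)" and avoid: "\<not> contains w \<alpha>"
    using w by (auto simp: Av_def)
  have "length s # w \<in> swords s"
    using s by (intro swords_add_last_letter[OF s(1) _ word]) simp_all
  moreover have "\<not> contains (length s # w) \<alpha>"
    using avoid swords_pseq_bounded[OF s(1) word] not_first by (rule not_contains_Cons_max)
  ultimately show ?thesis by (simp add: Av_def)
qed

lemma dup_last_in_Av:
  assumes s: "s \<noteq> []" "1 < last s" and w: "w \<in> Av (pseq s) \<alpha>"
    and isolated: "\<forall>i. i + 1 < length \<alpha> \<longrightarrow> \<not> (\<alpha> ! i = Max (set \<alpha>) \<and> \<alpha> ! (i + 1) = Max (set \<alpha>))"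
  shows "dup_last (length s) w \<in> Av s \<alpha>"
proof -
  have word: "w \<in> swords (pseq s)" and avoid: "\<not> contains w \<alpha>"
    using w by (auto simp: Av_def)
  have "count_list w (length s) = last s - 1"
    using word s(1) copies_length[OF s(1)] by (simp add: swords_iff_count copies_pseq)
  then have "count_list w (length s) \<noteq> 0" using s(2) by simp
  then have "length s \<in> set w" by (simp add: count_list_0_iff)
  then obtain xs ys where split: "w = xs @ length s # ys"
    and dup: "dup_last (length s) w = xs @ length s # length s # ys"
    by (rule dup_last_split)
  have "xs @ length s # length s # ys \<in> swords s"
    using s by (intro swords_add_last_letter[OF s(1) _ word]) (simp_all add: split)
  moreover have "\<not> contains (xs @ length s # length s # ys) \<alpha>"
    using avoid swords_pseq_bounded[OF s(1) word] isolated unfolding split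
    by (rule not_contains_dup_max)
  ultimately show ?thesis by (simp add: Av_def dup)
qed

lemma pword_image_Av:
  assumes s: "s \<noteq> []" "0 < last s"
    and not_last: "\<forall>i<length \<alpha>. \<alpha> ! i = Max (set \<alpha>) \<longrightarrow> i + 1 < length \<alpha>"
  shows "pword (length s) ` Av s \<alpha> = Av (pseq s) \<alpha>"
proof
  show "pword (length s) ` Av s \<alpha> \<subseteq> Av (pseq s) \<alpha>"
    using pword_in_Av[OF s(1)] by blast
  show "Av (pseq s) \<alpha> \<subseteq> pword (length s) ` Av s \<alpha>"
  proof
    fix w assume "w \<in> Av (pseq s) \<alpha>"
    then have "w @ [length s] \<in> Av s \<alpha>" by (rule snoc_in_Av[OF s _ not_last])
    moreover have "pword (length s) (w @ [length s]) = w" by (simp add: pword_def)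
    ultimately show "w \<in> pword (length s) ` Av s \<alpha>" by (metis image_eqI)
  qed
qed

lemma zigzag_Av:
  assumes "\<forall>x\<in>set s. 0 < x" and "\<alpha> \<noteq> []"
    and internal: "\<forall>i<length \<alpha>. \<alpha> ! i = Max (set \<alpha>) \<longrightarrow> 0 < i \<and> i + 1 < length \<alpha>"
    and isolated: "\<forall>i. i + 1 < length \<alpha> \<longrightarrow> \<not> (\<alpha> ! i = Max (set \<alpha>) \<and> \<alpha> ! (i + 1) = Max (set \<alpha>))"
  shows "zigzag s (Av s \<alpha>)"
  using assms(1)
proof (induction "sum_list s + length s" arbitrary: s rule: less_induct)
  case less
  show ?case
  proof (cases "s = []")
    case True
    then show ?thesis using Av_Nil[OF \<open>\<alpha> \<noteq> []\<close>] by (simp add: zigzag_Nil)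
  next
    case False
    then obtain t l where s: "s = t @ [l]" by (metis rev_exhaust)
    have last_pos: "0 < last s" using less.prems by (simp add: s)
    have "\<forall>x\<in>set (pseq s). 0 < x" and "sum_list (pseq s) + length (pseq s) < sum_list s + length s"
      using less.prems by (auto simp: s pseq_def)
    then have parent: "zigzag (pseq s) (Av (pseq s) \<alpha>)" using less.hyps by blast
    have children: "w @ [length s] \<in> Av s \<alpha> \<and>
        (if last s = 1 then length s # w \<in> Av s \<alpha> else dup_last (length s) w \<in> Av s \<alpha>)"
      if "w \<in> Av (pseq s) \<alpha>" for w
      using that False last_pos internal isolated
      by (auto intro: snoc_in_Av Cons_in_Av dup_last_in_Av)
    have "pword (length s) ` Av s \<alpha> = Av (pseq s) \<alpha>"
      using pword_image_Av False last_pos internal by blast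
    moreover have "Av s \<alpha> \<subseteq> swords s" by (auto simp: Av_def)
    ultimately show ?thesis
      unfolding zigzag_nonempty[OF False] using parent children by simp
  qed
qed

theorem mainTheorem4:
  fixes s \<alpha> :: "nat list"
  assumes "\<forall>x\<in>set s. x > 0"
    and "is_pattern \<alpha>"
    and "\<forall>i<length \<alpha>. \<alpha> ! i = Max (set \<alpha>) \<longrightarrow> 0 < i \<and> i + 1 < length \<alpha>"
    and "\<forall>i. i + 1 < length \<alpha> \<longrightarrow> \<not> (\<alpha> ! i = Max (set \<alpha>) \<and> \<alpha> ! (i + 1) = Max (set \<alpha>))"
  shows "zigzag s (Av s \<alpha>)"
proof (rule zigzag_Av[OF assms(1) _ assms(3,4)])
  show "\<alpha> \<noteq> []" using assms(2) by (simp add: is_pattern_def)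
qed

end
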